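(* Assume (CVX), (SM) and (BV). Fix $i\in[n]$ and a round $p$ of PEARL-SGD, and suppose $\gamma_k\equiv\gamma$ for $k=\tau p,\dots,\tau(p+1)-1$, where $0<\gamma\le\frac{1}{L_i}\min\{1,\frac{1}{\tau-1}\}$ (with $\frac{1}{\tau-1}=+\infty$ when $\tau=1$). Then for every $t=0,\dots,\tau$, $$\mathbb{E}\big[\|x^i_{\tau p}-x^i_{\tau p+t}\|^2\,\big|\,\mathbf{x}_{\tau p}\big]\le\gamma^2t^2\|\nabla f_i(x^i_{\tau p};x^{-i}_{\tau p})\|^2+\gamma^2t\big(1+2(t-1)(t+1)\gamma L_i\big)\sigma_i^2.$$
   Context: Setup. Let $n\ge1$, $D=d_1+\dots+d_n$, joint action $\mathbf{x}=(x^1,\dots,x^n)\in\mathbb{R}^D$, $x^i\in\mathbb{R}^{d_i}$, $x^{-i}$ all blocks except the $i$-th, $f_i(x^i;x^{-i})=f_i(\mathbf{x})$. For each $i$, $f_i(\mathbf{x})=\mathbb{E}_{\xi\sim\mathcal{D}_i}[f_{i,\xi}(\mathbf{x})]$; $\nabla f_i(x^i;x^{-i})$, $\nabla f_{i,\xi}(x^i;x^{-i})$ are gradients in $x^i$ only, with $\mathbb{E}_{\xi\sim\mathcal{D}_i}[\nabla f_{i,\xi}(x^i;x^{-i})]=\nabla f_i(x^i;x^{-i})$. (CVX): each $f_i(\cdot;x^{-i})$ is convex. (SM): $\|\nabla f_i(x^i;x^{-i})-\nabla f_i(y^i;x^{-i})\|\le L_i\|x^i-y^i\|$. (BV): $\mathbb{E}_{\xi\sim\mathcal{D}_i}\|\nabla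 f_{i,\xi}(x^i;x^{-i})-\nabla f_i(x^i;x^{-i})\|^2\le\sigma_i^2$ for all $x^i,x^{-i}$. PEARL-SGD: given $\mathbf{x}_0$, $\tau\ge1$, $R\ge1$, step-sizes $\gamma_k>0$: for $p=0,\dots,R-1$, each $i$, $k=\tau p,\dots,\tau(p+1)-1$, draw $\xi^i_k\sim\mathcal{D}_i$ independently of the past and set $x^i_{k+1}=x^i_k-\gamma_k\nabla f_{i,\xi^i_k}(x^i_k;x^{-i}_{\tau p})$; $\mathbf{x}_k=(x^1_k,\dots,x^n_k)$. *)

theory Defs
  imports "HOL-Probability.Probability"
begin

text \<open>Local PEARL-SGD iterates of player i during one round, started at
  x^i_{tau p} = y with the other players frozen at x^{-i}_{tau p} = z,
  constant step size gam, and sample sequence xs (xs k is the sample used at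
  local step k, i.e. at global step tau p + k).\<close>
fun pearl_local ::
  "('b \<Rightarrow> 'a::real_vector \<Rightarrow> 'o \<Rightarrow> 'a) \<Rightarrow> real \<Rightarrow> 'a \<Rightarrow> 'o \<Rightarrow> (nat \<Rightarrow> 'b) \<Rightarrow> nat \<Rightarrow> 'a" where
  "pearl_local g gam y z xs 0 = y"
| "pearl_local g gam y z xs (Suc k) =
     pearl_local g gam y z xs k - gam *\<^sub>R g (xs k) (pearl_local g gam y z xs k) z"

end

theory Submission
  imports Defs
begin

text \<open>For an L-smooth convex function the gradient is cocoercive. Hence, when \<gamma> L \<le> 1,
  a stochastic gradient step increases the expected squared gradient norm by at most
  \<gamma> L \<sigma>^2, so that E norm (G x_k)^2 \<le> norm (G y)^2 + k \<gamma> L \<sigma>^2 along the round.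
  The displacement is controlled through E norm (y - x_k + s G y)^2, by induction on k for
  all s \<ge> 0 simultaneously: the noise of a step contributes \<gamma>^2 \<sigma>^2, and monotonicity
  of the gradient replaces the step direction G x_k by G y at the price of
  \<gamma> (s + \<gamma>) (norm (G x_k)^2 - norm (G y)^2), which the first bound controls. Taking
  s = 0 gives a bound slightly sharper than the claimed one.\<close>

locale smooth_convex =
  fixes f :: "'a::real_inner \<Rightarrow> real" and G :: "'a \<Rightarrow> 'a" and L :: real
  assumes convex: "convex_on UNIV f"
    and gradient: "\<And>u. (f has_derivative (\<lambda>h. G u \<bullet> h)) (at u)"
    and lipschitz: "\<And>u v. norm (G u - G v) \<le> L * norm (u - v)"
    and L_pos: "L > 0"
begin

lemma has_real_derivative_along_line:
  "((\<lambda>s. f (u + s *\<^sub>R d)) has_real_derivative (G (u + s *\<^sub>R d) \<bullet> d)) (at s)"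
proof -
  have "((\<lambda>s. u + s *\<^sub>R d) has_derivative (\<lambda>s. s *\<^sub>R d)) (at s)"
    by (auto intro!: derivative_eq_intros)
  from diff_chain_at[OF this gradient]
  have "((\<lambda>s. f (u + s *\<^sub>R d)) has_derivative (\<lambda>s'. G (u + s *\<^sub>R d) \<bullet> (s' *\<^sub>R d))) (at s)"
    by (simp add: o_def)
  then show ?thesis
    unfolding has_field_derivative_def by (rule has_derivative_eq_rhs) (auto simp: fun_eq_iff)
qed

lemma gradient_inequality: "G u \<bullet> (w - u) \<le> f w - f u"
proof -
  define h where "h s = f (u + s *\<^sub>R (w - u))" for s
  have "convex_on UNIV h"
  proof (rule convex_onI)
    fix t a b :: real assume t: "0 < t" "t < 1"
    have "u + ((1 - t) *\<^sub>R a + t *\<^sub>R b) *\<^sub>R (w - u)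
        = (1 - t) *\<^sub>R (u + a *\<^sub>R (w - u)) + t *\<^sub>R (u + b *\<^sub>R (w - u))"
      by (simp add: algebra_simps)
    then show "h ((1 - t) *\<^sub>R a + t *\<^sub>R b) \<le> (1 - t) * h a + t * h b"
      unfolding h_def using convex_onD[OF convex, of t] t by simp
  qed simp
  moreover have "(h has_real_derivative (G u \<bullet> (w - u))) (at 0 within UNIV)"
    unfolding h_def using has_real_derivative_along_line[of u "w - u" 0] by simp
  ultimately have "h 1 - h 0 \<ge> (G u \<bullet> (w - u)) * (1 - 0)"
    by (intro convex_on_imp_above_tangent) auto
  then show ?thesis unfolding h_def by simp
qed

lemma descent_inequality: "f w \<le> f u + G u \<bullet> (w - u) + L / 2 * (norm (w - u))\<^sup>2"
proof -
  define d where "d = w - u"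
  define k where "k s = f (u + s *\<^sub>R d) - s * (G u \<bullet> d) - L / 2 * s\<^sup>2 * (norm d)\<^sup>2" for s
  have "k 1 \<le> k 0"
  proof (rule DERIV_nonpos_imp_nonincreasing[of 0 1 k])
    fix s :: real assume s: "0 \<le> s" "s \<le> 1"
    have "(G (u + s *\<^sub>R d) - G u) \<bullet> d \<le> norm (G (u + s *\<^sub>R d) - G u) * norm d"
      by (rule norm_cauchy_schwarz)
    also have "\<dots> \<le> L * norm (s *\<^sub>R d) * norm d"
      using lipschitz[of "u + s *\<^sub>R d" u] by (intro mult_right_mono) auto
    also have "\<dots> = L * s * (norm d)\<^sup>2"
      using s by (simp add: power2_eq_square)
    finally have "(G (u + s *\<^sub>R d) - G u) \<bullet> d - L * s * (norm d)\<^sup>2 \<le> 0"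
      by simp
    moreover have "(k has_real_derivative (G (u + s *\<^sub>R d) - G u) \<bullet> d - L * s * (norm d)\<^sup>2) (at s)"
      unfolding k_def inner_diff_left
      by (rule derivative_eq_intros has_real_derivative_along_line | simp)+
    ultimately show "\<exists>y. (k has_real_derivative y) (at s) \<and> y \<le> 0"
      by blast
  qed simp
  then show ?thesis unfolding k_def d_def by simp
qed

text \<open>Combine the gradient inequality at u with the descent inequality at
  w' = w - (G w - G u) / L.\<close>
lemma gradient_inequality_strong:
  "G u \<bullet> (w - u) + (norm (G w - G u))\<^sup>2 / (2 * L) \<le> f w - f u"
proof -
  define r where "r = G w - G u"
  define w' where "w' = w - (1 / L) *\<^sub>R r"
  have "G u \<bullet> (w' - u) \<le> f w' - f u"
    by (rule gradient_inequality)
  moreover have "f w' \<le> f w + G w \<bullet> (w' - w) + L / 2 * (norm (w' - w))\<^sup>2"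
    by (rule descent_inequality)
  moreover have "G u \<bullet> (w' - u) = G u \<bullet> (w - u) - (G u \<bullet> r) / L"
    and "G w \<bullet> (w' - w) = - (G w \<bullet> r) / L"
    and "L / 2 * (norm (w' - w))\<^sup>2 = (norm r)\<^sup>2 / (2 * L)"
    using L_pos unfolding w'_def by (simp_all add: inner_diff_right power2_eq_square)
  moreover have "(G w \<bullet> r) / L - (G u \<bullet> r) / L = (norm r)\<^sup>2 / L"
    unfolding r_def by (simp add: inner_diff_left power2_norm_eq_inner diff_divide_distrib[symmetric])
  moreover have "(norm r)\<^sup>2 / L = 2 * ((norm r)\<^sup>2 / (2 * L))"
    by simp
  ultimately show ?thesis unfolding r_def by linarith
qed


lemma cocoercive: "(norm (G w - G u))\<^sup>2 \<le> L * ((G w - G u) \<bullet> (w - u))"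
proof -
  have "G u \<bullet> (w - u) + (norm (G w - G u))\<^sup>2 / (2 * L) \<le> f w - f u"
    and "G w \<bullet> (u - w) + (norm (G u - G w))\<^sup>2 / (2 * L) \<le> f u - f w"
    by (rule gradient_inequality_strong)+
  then have "(norm (G w - G u))\<^sup>2 / L \<le> (G w - G u) \<bullet> (w - u)"
    by (simp add: norm_minus_commute inner_diff_left inner_diff_right field_simps)
  then show ?thesis
    using L_pos by (simp add: field_simps)
qed

lemma gradient_monotone: "(w - u) \<bullet> (G w - G u) \<ge> 0"
proof -
  have "0 \<le> L * ((G w - G u) \<bullet> (w - u))"
    using order_trans[OF zero_le_power2 cocoercive] .
  then show ?thesis
    using L_pos by (simp add: inner_commute zero_le_mult_iff)
qed

lemma norm_gradient_step_le:
  assumes "\<gamma> > 0" "\<gamma> * L \<le> 1"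
  shows "(norm (G (x - \<gamma> *\<^sub>R q)))\<^sup>2 \<le> (norm (G x))\<^sup>2 + \<gamma> * L * (norm (q - G x))\<^sup>2"
proof -
  define d where "d = G (x - \<gamma> *\<^sub>R q) - G x"
  define e where "e = q - G x"
  define c where "c = \<gamma> * L"
  have c: "0 < c" "c \<le> 1"
    using assms L_pos unfolding c_def by auto
  have "(norm d)\<^sup>2 \<le> L * (d \<bullet> ((x - \<gamma> *\<^sub>R q) - x))"
    unfolding d_def by (rule cocoercive)
  also have "\<dots> = - c * (d \<bullet> G x) - c * (d \<bullet> e)"
    unfolding c_def e_def by (simp add: inner_diff_right algebra_simps)
  finally have coco: "(norm d)\<^sup>2 \<le> - c * (d \<bullet> G x) - c * (d \<bullet> e)" .
  have "0 \<le> (norm (d + c *\<^sub>R e))\<^sup>2"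
    by simp
  also have "\<dots> = (norm d)\<^sup>2 + 2 * c * (d \<bullet> e) + c\<^sup>2 * (norm e)\<^sup>2"
    unfolding power2_norm_eq_inner
    by (simp add: inner_add_left inner_add_right inner_commute algebra_simps power2_eq_square)
  finally have "c * (2 * (d \<bullet> G x) + (norm d)\<^sup>2) \<le> c * (c * (norm e)\<^sup>2)"
    using coco c mult_right_mono[OF c(2) zero_le_power2[of "norm d"]]
    by (simp add: algebra_simps power2_eq_square)
  then have "2 * (d \<bullet> G x) + (norm d)\<^sup>2 \<le> c * (norm e)\<^sup>2"
    using c by simp
  moreover have "(norm (G (x - \<gamma> *\<^sub>R q)))\<^sup>2 = (norm (G x))\<^sup>2 + 2 * (d \<bullet> G x) + (norm d)\<^sup>2"
    unfolding d_def power2_norm_eq_inner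
    by (simp add: inner_diff_left inner_diff_right inner_commute algebra_simps)
  ultimately show ?thesis
    unfolding c_def e_def by linarith
qed

end

lemma (in prob_space) nn_integral_norm_sq_add_scaleR_le:
  fixes q :: "'a \<Rightarrow> 'c::euclidean_space"
  assumes q: "integrable M q" and mean: "(\<integral>\<xi>. q \<xi> \<partial>M) = m"
    and variance: "(\<integral>\<^sup>+\<xi>. ennreal ((norm (q \<xi> - m))\<^sup>2) \<partial>M) \<le> ennreal (\<sigma>\<^sup>2)"
  shows "(\<integral>\<^sup>+\<xi>. ennreal ((norm (a + \<gamma> *\<^sub>R q \<xi>))\<^sup>2) \<partial>M)
    \<le> ennreal ((norm (a + \<gamma> *\<^sub>R m))\<^sup>2 + \<gamma>\<^sup>2 * \<sigma>\<^sup>2)"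
proof -
  define b where "b = a + \<gamma> *\<^sub>R m"
  define e where "e \<xi> = q \<xi> - m" for \<xi>
  have [measurable]: "q \<in> borel_measurable M"
    using q by (rule borel_measurable_integrable)
  have e: "integrable M e" "(\<integral>\<xi>. e \<xi> \<partial>M) = 0"
    unfolding e_def using q mean by (auto simp: prob_space)
  have variance_e: "(\<integral>\<^sup>+\<xi>. ennreal ((norm (e \<xi>))\<^sup>2) \<partial>M) \<le> ennreal (\<sigma>\<^sup>2)"
    using variance unfolding e_def .
  have e2: "integrable M (\<lambda>\<xi>. (norm (e \<xi>))\<^sup>2)"
    using le_less_trans[OF variance_e ennreal_less_top]
    unfolding e_def by (intro integrableI_bounded) auto
  have "(\<integral>\<xi>. (norm (e \<xi>))\<^sup>2 \<partial>M) \<le> \<sigma>\<^sup>2"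
    using variance_e nn_integral_eq_integral[OF e2] by (auto simp: ennreal_le_iff2)
  have expand: "(norm (a + \<gamma> *\<^sub>R q \<xi>))\<^sup>2 = (norm b)\<^sup>2 + 2 * \<gamma> * (b \<bullet> e \<xi>) + \<gamma>\<^sup>2 * (norm (e \<xi>))\<^sup>2"
    for \<xi>
  proof -
    have "a + \<gamma> *\<^sub>R q \<xi> = b + \<gamma> *\<^sub>R e \<xi>"
      unfolding b_def e_def by (simp add: algebra_simps)
    then show ?thesis
      unfolding power2_norm_eq_inner
      by (simp add: inner_add_left inner_add_right inner_commute algebra_simps power2_eq_square)
  qed
  have "(\<integral>\<^sup>+\<xi>. ennreal ((norm (a + \<gamma> *\<^sub>R q \<xi>))\<^sup>2) \<partial>M)
      = ennreal (\<integral>\<xi>. (norm b)\<^sup>2 + 2 * \<gamma> * (b \<bullet> e \<xi>) + \<gamma>\<^sup>2 * (norm (e \<xi>))\<^sup>2 \<partial>M)"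
    unfolding expand
  proof (rule nn_integral_eq_integral)
    show "integrable M (\<lambda>\<xi>. (norm b)\<^sup>2 + 2 * \<gamma> * (b \<bullet> e \<xi>) + \<gamma>\<^sup>2 * (norm (e \<xi>))\<^sup>2)"
      using e e2 by simp
  qed (simp add: expand[symmetric])
  also have "\<dots> = ennreal ((norm b)\<^sup>2 + \<gamma>\<^sup>2 * (\<integral>\<xi>. (norm (e \<xi>))\<^sup>2 \<partial>M))"
    using e e2 by (simp add: prob_space)
  also have "\<dots> \<le> ennreal ((norm b)\<^sup>2 + \<gamma>\<^sup>2 * \<sigma>\<^sup>2)"
    using \<open>(\<integral>\<xi>. (norm (e \<xi>))\<^sup>2 \<partial>M) \<le> \<sigma>\<^sup>2\<close> by (intro ennreal_leI add_left_mono mult_left_mono) auto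
  finally show ?thesis
    unfolding b_def .
qed

lemma (in prob_space) nn_integral_PiM_lessThan_Suc:
  assumes "h \<in> borel_measurable (PiM {..<Suc k} (\<lambda>_. M))"
  shows "(\<integral>\<^sup>+xs. h xs \<partial>PiM {..<Suc k} (\<lambda>_. M))
    = (\<integral>\<^sup>+xs. (\<integral>\<^sup>+\<xi>. h (xs(k := \<xi>)) \<partial>M) \<partial>PiM {..<k} (\<lambda>_. M))"
proof -
  interpret product_sigma_finite "\<lambda>_. M"
    by (simp add: product_sigma_finite_def sigma_finite_measure_axioms)
  show ?thesis
    using assms unfolding lessThan_Suc by (intro product_nn_integral_insert) auto
qed

lemma pearl_local_cong:
  "(\<And>j. j < k \<Longrightarrow> xs j = xs' j) \<Longrightarrow> pearl_local g \<gamma> y z xs k = pearl_local g \<gamma> y z xs' k"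
  by (induction k) auto

lemma measurable_pearl_local [measurable]:
  fixes g :: "'b \<Rightarrow> 'a::euclidean_space \<Rightarrow> 'o \<Rightarrow> 'a"
  assumes "(\<lambda>(\<xi>, u). g \<xi> u z) \<in> borel_measurable (D \<Otimes>\<^sub>M borel)" and "k \<le> m"
  shows "(\<lambda>xs. pearl_local g \<gamma> y z xs k) \<in> borel_measurable (PiM {..<m} (\<lambda>_. D))"
  using \<open>k \<le> m\<close>
proof (induction k)
  case (Suc k)
  have "(\<lambda>xs. (xs k, pearl_local g \<gamma> y z xs k)) \<in> measurable (PiM {..<m} (\<lambda>_. D)) (D \<Otimes>\<^sub>M borel)"
    using Suc by (intro measurable_Pair measurable_component_singleton) auto
  from measurable_compose[OF this assms(1)] Suc show ?case
    by simp
qed simp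

lemma norm_sq_exchange_le:
  fixes d v w :: "'a::real_inner"
  assumes "d \<bullet> (v - w) \<ge> 0" and "s \<ge> 0" and "\<gamma> \<ge> 0"
  shows "(norm (d + s *\<^sub>R v + \<gamma> *\<^sub>R w))\<^sup>2 + \<gamma> * (s + \<gamma>) * (norm v)\<^sup>2
     \<le> (norm (d + (s + \<gamma>) *\<^sub>R v))\<^sup>2 + \<gamma> * (s + \<gamma>) * (norm w)\<^sup>2"
proof -
  have "(norm (d + (s + \<gamma>) *\<^sub>R v))\<^sup>2 + \<gamma> * (s + \<gamma>) * (norm w)\<^sup>2
      - ((norm (d + s *\<^sub>R v + \<gamma> *\<^sub>R w))\<^sup>2 + \<gamma> * (s + \<gamma>) * (norm v)\<^sup>2)
      = 2 * \<gamma> * (d \<bullet> (v - w)) + s * \<gamma> * (norm (v - w))\<^sup>2"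
    unfolding power2_norm_eq_inner
    by (simp add: inner_add_left inner_add_right inner_diff_left inner_diff_right
        inner_commute algebra_simps power2_eq_square)
  moreover have "0 \<le> 2 * \<gamma> * (d \<bullet> (v - w)) + s * \<gamma> * (norm (v - w))\<^sup>2"
    using assms by simp
  ultimately show ?thesis
    by linarith
qed

text \<open>One round of PEARL-SGD for player i: y is x^i at the start of the round, z the frozen
  actions of the other players, and g \<xi> u z the sampled gradient.\<close>
locale pearl_round = smooth_convex f G L + D: prob_space D
  for f :: "'a::euclidean_space \<Rightarrow> real" and G L and D :: "'b measure" +
  fixes g :: "'b \<Rightarrow> 'a \<Rightarrow> 'o \<Rightarrow> 'a" and z :: 'o and \<sigma> \<gamma> :: real and y :: 'a
  assumes oracle_measurable: "(\<lambda>(\<xi>, u). g \<xi> u z) \<in> borel_measurable (D \<Otimes>\<^sub>M borel)"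
    and oracle_integrable: "\<And>u. integrable D (\<lambda>\<xi>. g \<xi> u z)"
    and oracle_unbiased: "\<And>u. (\<integral>\<xi>. g \<xi> u z \<partial>D) = G u"
    and oracle_variance: "\<And>u. (\<integral>\<^sup>+\<xi>. ennreal ((norm (g \<xi> u z - G u))\<^sup>2) \<partial>D) \<le> ennreal (\<sigma>\<^sup>2)"
    and step_pos: "\<gamma> > 0"
    and step_le: "\<gamma> * L \<le> 1"
begin

abbreviation samples :: "nat \<Rightarrow> (nat \<Rightarrow> 'b) measure" where
  "samples k \<equiv> PiM {..<k} (\<lambda>_. D)"

abbreviation iterate :: "nat \<Rightarrow> (nat \<Rightarrow> 'b) \<Rightarrow> 'a" where
  "iterate k xs \<equiv> pearl_local g \<gamma> y z xs k"

lemma prob_space_samples: "prob_space (samples k)"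
  by (rule prob_space_PiM) (rule D.prob_space_axioms)

lemma measurable_gradient [measurable]: "G \<in> borel_measurable borel"
proof -
  have "L-lipschitz_on UNIV G"
    using lipschitz L_pos by (intro lipschitz_onI) (auto simp: dist_norm)
  then show ?thesis
    by (intro borel_measurable_continuous_onI lipschitz_on_continuous_on)
qed

lemma measurable_iterate: "k \<le> m \<Longrightarrow> iterate k \<in> borel_measurable (samples m)"
  using oracle_measurable by (rule measurable_pearl_local[where g = g and z = z])

lemma iterate_Suc_update:
  "iterate (Suc k) (xs(k := \<xi>)) = iterate k xs - \<gamma> *\<^sub>R g \<xi> (iterate k xs) z"
proof -
  have "iterate k (xs(k := \<xi>)) = iterate k xs"
    by (rule pearl_local_cong) simp
  then show ?thesis
    by simp
qed

text \<open>The sample of step k is independent of the first k samples, which determine the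
  iterate at step k.\<close>
lemma nn_integral_iterate_Suc:
  assumes [measurable]: "h \<in> borel_measurable borel"
  shows "(\<integral>\<^sup>+xs. h (iterate (Suc k) xs) \<partial>samples (Suc k))
    = (\<integral>\<^sup>+xs. (\<integral>\<^sup>+\<xi>. h (iterate k xs - \<gamma> *\<^sub>R g \<xi> (iterate k xs) z) \<partial>D) \<partial>samples k)"
proof -
  have "(\<lambda>xs. h (iterate (Suc k) xs)) \<in> borel_measurable (samples (Suc k))"
    using measurable_iterate[of "Suc k" "Suc k"] by measurable
  then have "(\<integral>\<^sup>+xs. h (iterate (Suc k) xs) \<partial>samples (Suc k))
      = (\<integral>\<^sup>+xs. (\<integral>\<^sup>+\<xi>. h (iterate (Suc k) (xs(k := \<xi>))) \<partial>D) \<partial>samples k)"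
    by (rule D.nn_integral_PiM_lessThan_Suc)
  then show ?thesis
    by (simp only: iterate_Suc_update)
qed

lemma nn_integral_norm_gradient_step_le:
  "(\<integral>\<^sup>+\<xi>. ennreal ((norm (G (u - \<gamma> *\<^sub>R g \<xi> u z)))\<^sup>2) \<partial>D)
    \<le> ennreal ((norm (G u))\<^sup>2 + \<gamma> * L * \<sigma>\<^sup>2)"
proof -
  have "(\<integral>\<^sup>+\<xi>. ennreal ((norm (G (u - \<gamma> *\<^sub>R g \<xi> u z)))\<^sup>2) \<partial>D)
      \<le> (\<integral>\<^sup>+\<xi>. ennreal ((norm (G u))\<^sup>2) + ennreal (\<gamma> * L) * ennreal ((norm (g \<xi> u z - G u))\<^sup>2) \<partial>D)"
  proof (rule nn_integral_mono)
    fix \<xi>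
    have "ennreal ((norm (G (u - \<gamma> *\<^sub>R g \<xi> u z)))\<^sup>2)
        \<le> ennreal ((norm (G u))\<^sup>2 + \<gamma> * L * (norm (g \<xi> u z - G u))\<^sup>2)"
      using norm_gradient_step_le[OF step_pos step_le] by (rule ennreal_leI)
    then show "ennreal ((norm (G (u - \<gamma> *\<^sub>R g \<xi> u z)))\<^sup>2)
        \<le> ennreal ((norm (G u))\<^sup>2) + ennreal (\<gamma> * L) * ennreal ((norm (g \<xi> u z - G u))\<^sup>2)"
      using step_pos L_pos by (simp add: ennreal_plus ennreal_mult)
  qed
  also have "\<dots> = ennreal ((norm (G u))\<^sup>2)
      + ennreal (\<gamma> * L) * (\<integral>\<^sup>+\<xi>. ennreal ((norm (g \<xi> u z - G u))\<^sup>2) \<partial>D)"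
    using oracle_integrable[of u, THEN borel_measurable_integrable]
    by (simp add: nn_integral_add nn_integral_cmult D.emeasure_space_1)
  also have "\<dots> \<le> ennreal ((norm (G u))\<^sup>2 + \<gamma> * L * \<sigma>\<^sup>2)"
    using oracle_variance[of u] step_pos L_pos
    by (simp add: ennreal_plus ennreal_mult mult_left_mono add_left_mono)
  finally show ?thesis .
qed


lemma nn_integral_norm_gradient_iterate_le:
  "(\<integral>\<^sup>+xs. ennreal ((norm (G (iterate k xs)))\<^sup>2) \<partial>samples k)
    \<le> ennreal ((norm (G y))\<^sup>2 + real k * \<gamma> * L * \<sigma>\<^sup>2)"
proof (induction k)
  case 0
  interpret S: prob_space "samples 0"
    by (rule prob_space_samples)
  show ?case
    using S.emeasure_space_1 by simp
next
  case (Suc k)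
  interpret S: prob_space "samples k"
    by (rule prob_space_samples)
  have [measurable]: "iterate k \<in> borel_measurable (samples k)"
    by (rule measurable_iterate) simp
  have "(\<integral>\<^sup>+xs. ennreal ((norm (G (iterate (Suc k) xs)))\<^sup>2) \<partial>samples (Suc k))
      = (\<integral>\<^sup>+xs. (\<integral>\<^sup>+\<xi>. ennreal ((norm (G (iterate k xs - \<gamma> *\<^sub>R g \<xi> (iterate k xs) z)))\<^sup>2) \<partial>D)
          \<partial>samples k)"
    by (rule nn_integral_iterate_Suc) measurable
  also have "\<dots> \<le> (\<integral>\<^sup>+xs. ennreal ((norm (G (iterate k xs)))\<^sup>2) + ennreal (\<gamma> * L * \<sigma>\<^sup>2) \<partial>samples k)"
    using nn_integral_norm_gradient_step_le step_pos L_pos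
    by (intro nn_integral_mono) (simp add: ennreal_plus)
  also have "\<dots> = (\<integral>\<^sup>+xs. ennreal ((norm (G (iterate k xs)))\<^sup>2) \<partial>samples k) + ennreal (\<gamma> * L * \<sigma>\<^sup>2)"
    by (simp add: nn_integral_add S.emeasure_space_1)
  also have "\<dots> \<le> ennreal ((norm (G y))\<^sup>2 + real k * \<gamma> * L * \<sigma>\<^sup>2) + ennreal (\<gamma> * L * \<sigma>\<^sup>2)"
    using Suc.IH by (rule add_right_mono)
  also have "\<dots> = ennreal ((norm (G y))\<^sup>2 + real (Suc k) * \<gamma> * L * \<sigma>\<^sup>2)"
    using step_pos L_pos by (subst ennreal_plus[symmetric]) (auto simp: algebra_simps)
  finally show ?case .
qed

lemma nn_integral_displacement_Suc_le_mean_step: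
  "(\<integral>\<^sup>+xs. ennreal ((norm (y - iterate (Suc k) xs + s *\<^sub>R G y))\<^sup>2) \<partial>samples (Suc k))
    \<le> (\<integral>\<^sup>+xs. ennreal ((norm ((y - iterate k xs + s *\<^sub>R G y) + \<gamma> *\<^sub>R G (iterate k xs)))\<^sup>2
      + \<gamma>\<^sup>2 * \<sigma>\<^sup>2) \<partial>samples k)"
proof -
  have [measurable]: "iterate k \<in> borel_measurable (samples k)"
    by (rule measurable_iterate) simp
  have "(\<integral>\<^sup>+xs. ennreal ((norm (y - iterate (Suc k) xs + s *\<^sub>R G y))\<^sup>2) \<partial>samples (Suc k))
      = (\<integral>\<^sup>+xs. (\<integral>\<^sup>+\<xi>. ennreal ((norm ((y - iterate k xs + s *\<^sub>R G y)
          + \<gamma> *\<^sub>R g \<xi> (iterate k xs) z))\<^sup>2) \<partial>D) \<partial>samples k)"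
    by (subst nn_integral_iterate_Suc) (simp_all add: algebra_simps)
  also have "\<dots> \<le> (\<integral>\<^sup>+xs. ennreal ((norm ((y - iterate k xs + s *\<^sub>R G y)
      + \<gamma> *\<^sub>R G (iterate k xs)))\<^sup>2 + \<gamma>\<^sup>2 * \<sigma>\<^sup>2) \<partial>samples k)"
    by (intro nn_integral_mono D.nn_integral_norm_sq_add_scaleR_le
        oracle_integrable oracle_unbiased oracle_variance)
  finally show ?thesis .
qed

lemma nn_integral_displacement_Suc_le:
  assumes "s \<ge> 0"
  shows "(\<integral>\<^sup>+xs. ennreal ((norm (y - iterate (Suc k) xs + s *\<^sub>R G y))\<^sup>2) \<partial>samples (Suc k))
      + ennreal (\<gamma> * (s + \<gamma>) * (norm (G y))\<^sup>2)
    \<le> (\<integral>\<^sup>+xs. ennreal ((norm (y - iterate k xs + (s + \<gamma>) *\<^sub>R G y))\<^sup>2) \<partial>samples k)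
      + ennreal (\<gamma> * (s + \<gamma>)) * (\<integral>\<^sup>+xs. ennreal ((norm (G (iterate k xs)))\<^sup>2) \<partial>samples k)
      + ennreal (\<gamma>\<^sup>2 * \<sigma>\<^sup>2)"
proof -
  interpret S: prob_space "samples k"
    by (rule prob_space_samples)
  have [measurable]: "iterate k \<in> borel_measurable (samples k)"
    by (rule measurable_iterate) simp
  define c where "c = \<gamma> * (s + \<gamma>)"
  have c: "c \<ge> 0"
    using assms step_pos unfolding c_def by simp
  have "(\<integral>\<^sup>+xs. ennreal ((norm (y - iterate (Suc k) xs + s *\<^sub>R G y))\<^sup>2) \<partial>samples (Suc k))
      + ennreal (c * (norm (G y))\<^sup>2)
    \<le> (\<integral>\<^sup>+xs. ennreal ((norm ((y - iterate k xs + s *\<^sub>R G y) + \<gamma> *\<^sub>R G (iterate k xs)))\<^sup>2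
      + \<gamma>\<^sup>2 * \<sigma>\<^sup>2 + c * (norm (G y))\<^sup>2) \<partial>samples k)"
    using nn_integral_displacement_Suc_le_mean_step[of k s] c
    by (simp add: nn_integral_add ennreal_plus S.emeasure_space_1 add_right_mono)
  also have "\<dots> \<le> (\<integral>\<^sup>+xs. ennreal ((norm (y - iterate k xs + (s + \<gamma>) *\<^sub>R G y))\<^sup>2)
      + ennreal c * ennreal ((norm (G (iterate k xs)))\<^sup>2) + ennreal (\<gamma>\<^sup>2 * \<sigma>\<^sup>2) \<partial>samples k)"
  proof (rule nn_integral_mono)
    fix xs
    have "(norm (y - iterate k xs + s *\<^sub>R G y + \<gamma> *\<^sub>R G (iterate k xs)))\<^sup>2 + c * (norm (G y))\<^sup>2
        \<le> (norm (y - iterate k xs + (s + \<gamma>) *\<^sub>R G y))\<^sup>2 + c * (norm (G (iterate k xs)))\<^sup>2"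
      unfolding c_def using assms step_pos
      by (intro norm_sq_exchange_le gradient_monotone) simp_all
    then show "ennreal ((norm ((y - iterate k xs + s *\<^sub>R G y) + \<gamma> *\<^sub>R G (iterate k xs)))\<^sup>2
        + \<gamma>\<^sup>2 * \<sigma>\<^sup>2 + c * (norm (G y))\<^sup>2)
      \<le> ennreal ((norm (y - iterate k xs + (s + \<gamma>) *\<^sub>R G y))\<^sup>2)
        + ennreal c * ennreal ((norm (G (iterate k xs)))\<^sup>2) + ennreal (\<gamma>\<^sup>2 * \<sigma>\<^sup>2)"
      using c by (simp add: ennreal_plus[symmetric] ennreal_mult[symmetric] del: ennreal_plus)
  qed
  also have "\<dots> = (\<integral>\<^sup>+xs. ennreal ((norm (y - iterate k xs + (s + \<gamma>) *\<^sub>R G y))\<^sup>2) \<partial>samples k)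
      + ennreal c * (\<integral>\<^sup>+xs. ennreal ((norm (G (iterate k xs)))\<^sup>2) \<partial>samples k)
      + ennreal (\<gamma>\<^sup>2 * \<sigma>\<^sup>2)"
    by (simp add: nn_integral_add nn_integral_cmult S.emeasure_space_1)
  finally show ?thesis
    unfolding c_def .
qed

text \<open>The invariant of the induction over the local steps; s is the weight of G y, which
  grows by \<gamma> with each step.\<close>
definition displacement_bound :: "nat \<Rightarrow> real \<Rightarrow> real" where
  "displacement_bound k s = (s + real k * \<gamma>)\<^sup>2 * (norm (G y))\<^sup>2 + real k * \<gamma>\<^sup>2 * \<sigma>\<^sup>2
    + \<gamma>\<^sup>2 * L * \<sigma>\<^sup>2 * (real k * (real k - 1) * (s + real k * \<gamma>))"

lemma displacement_bound_nonneg: "s \<ge> 0 \<Longrightarrow> displacement_bound k s \<ge> 0"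
  unfolding displacement_bound_def using step_pos L_pos
  by (cases k) (auto intro!: add_nonneg_nonneg mult_nonneg_nonneg)

lemma displacement_bound_Suc_ge:
  assumes "s \<ge> 0"
  shows "displacement_bound k (s + \<gamma>) + \<gamma> * (s + \<gamma>) * ((norm (G y))\<^sup>2 + real k * \<gamma> * L * \<sigma>\<^sup>2)
      + \<gamma>\<^sup>2 * \<sigma>\<^sup>2
    \<le> displacement_bound (Suc k) s + \<gamma> * (s + \<gamma>) * (norm (G y))\<^sup>2"
proof -
  have "displacement_bound (Suc k) s + \<gamma> * (s + \<gamma>) * (norm (G y))\<^sup>2
      - (displacement_bound k (s + \<gamma>) + \<gamma> * (s + \<gamma>) * ((norm (G y))\<^sup>2 + real k * \<gamma> * L * \<sigma>\<^sup>2)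
        + \<gamma>\<^sup>2 * \<sigma>\<^sup>2)
    = \<gamma>\<^sup>2 * L * \<sigma>\<^sup>2 * (real k * (s + (2 * real k + 1) * \<gamma>))"
    unfolding displacement_bound_def by (simp add: power2_eq_square algebra_simps)
  moreover have "0 \<le> \<gamma>\<^sup>2 * L * \<sigma>\<^sup>2 * (real k * (s + (2 * real k + 1) * \<gamma>))"
    using assms step_pos L_pos by simp
  ultimately show ?thesis
    by linarith
qed

lemma nn_integral_displacement_iterate_le:
  "s \<ge> 0 \<Longrightarrow> (\<integral>\<^sup>+xs. ennreal ((norm (y - iterate k xs + s *\<^sub>R G y))\<^sup>2) \<partial>samples k)
    \<le> ennreal (displacement_bound k s)"
proof (induction k arbitrary: s)
  case 0
  interpret S: prob_space "samples 0"
    by (rule prob_space_samples)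
  show ?case
    using S.emeasure_space_1 by (simp add: displacement_bound_def power_mult_distrib)
next
  case (Suc k)
  define c where "c = \<gamma> * (s + \<gamma>)"
  have c: "c \<ge> 0"
    using Suc.prems step_pos unfolding c_def by simp
  have "(\<integral>\<^sup>+xs. ennreal ((norm (y - iterate (Suc k) xs + s *\<^sub>R G y))\<^sup>2) \<partial>samples (Suc k))
      + ennreal (c * (norm (G y))\<^sup>2)
    \<le> (\<integral>\<^sup>+xs. ennreal ((norm (y - iterate k xs + (s + \<gamma>) *\<^sub>R G y))\<^sup>2) \<partial>samples k)
      + ennreal c * (\<integral>\<^sup>+xs. ennreal ((norm (G (iterate k xs)))\<^sup>2) \<partial>samples k)
      + ennreal (\<gamma>\<^sup>2 * \<sigma>\<^sup>2)"
    unfolding c_def by (rule nn_integral_displacement_Suc_le[OF Suc.prems])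
  also have "\<dots> \<le> ennreal (displacement_bound k (s + \<gamma>))
      + ennreal c * ennreal ((norm (G y))\<^sup>2 + real k * \<gamma> * L * \<sigma>\<^sup>2) + ennreal (\<gamma>\<^sup>2 * \<sigma>\<^sup>2)"
    using Suc.prems step_pos
    by (intro add_mono mult_left_mono Suc.IH nn_integral_norm_gradient_iterate_le) auto
  also have "\<dots> \<le> ennreal (displacement_bound (Suc k) s + c * (norm (G y))\<^sup>2)"
    using displacement_bound_Suc_ge[OF Suc.prems, of k] displacement_bound_nonneg[of "s + \<gamma>" k]
      Suc.prems c step_pos L_pos
    by (simp add: c_def ennreal_mult[symmetric] ennreal_plus[symmetric] ennreal_leI del: ennreal_plus)
  also have "\<dots> = ennreal (displacement_bound (Suc k) s) + ennreal (c * (norm (G y))\<^sup>2)"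
    using displacement_bound_nonneg[OF Suc.prems] c by (simp add: ennreal_plus)
  finally show ?case
    by simp
qed

end

theorem lemma2:
  fixes D :: "'b measure"
    and F :: "'b \<Rightarrow> 'a::euclidean_space \<Rightarrow> 'o \<Rightarrow> real"
    and g :: "'b \<Rightarrow> 'a \<Rightarrow> 'o \<Rightarrow> 'a"
    and f :: "'a \<Rightarrow> 'o \<Rightarrow> real"
    and G :: "'a \<Rightarrow> 'o \<Rightarrow> 'a"
    and L \<sigma> \<gamma> :: real and \<tau> t :: nat
    and y :: 'a and z :: 'o
  assumes D: "prob_space D"
    and F_grad: "\<And>\<xi> u w. \<xi> \<in> space D \<Longrightarrow>
                   ((\<lambda>v. F \<xi> v w) has_derivative (\<lambda>h. g \<xi> u w \<bullet> h)) (at u)"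
    and F_int: "\<And>u w. integrable D (\<lambda>\<xi>. F \<xi> u w)"
    and f_def: "\<And>u w. f u w = (\<integral>\<xi>. F \<xi> u w \<partial>D)"
    and f_grad: "\<And>u w. ((\<lambda>v. f v w) has_derivative (\<lambda>h. G u w \<bullet> h)) (at u)"
    and g_meas: "\<And>w. (\<lambda>(\<xi>, u). g \<xi> u w) \<in> borel_measurable (D \<Otimes>\<^sub>M borel)"
    and g_int: "\<And>u w. integrable D (\<lambda>\<xi>. g \<xi> u w)"
    and unbiased: "\<And>u w. (\<integral>\<xi>. g \<xi> u w \<partial>D) = G u w"
    and CVX: "\<And>w. convex_on UNIV (\<lambda>v. f v w)"
    and SM: "\<And>u v w. norm (G u w - G v w) \<le> L * norm (u - v)"
    and BV: "\<And>u w. (\<integral>\<^sup>+\<xi>. ennreal ((norm (g \<xi> u w - G u w))\<^sup>2) \<partial>D) \<le> ennreal (\<sigma>\<^sup>2)"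
    and L_pos: "L > 0"
    and tau: "\<tau> \<ge> 1"
    and gam_pos: "\<gamma> > 0"
    and gam1: "\<gamma> \<le> 1 / L"
    and gam2: "\<tau> \<ge> 2 \<Longrightarrow> \<gamma> \<le> 1 / (L * (real \<tau> - 1))"
    and t: "t \<le> \<tau>"
  shows "(\<integral>\<^sup>+xs. ennreal ((norm (y - pearl_local g \<gamma> y z xs t))\<^sup>2)
            \<partial>(PiM {..<t} (\<lambda>_. D)))
         \<le> ennreal (\<gamma>\<^sup>2 * (real t)\<^sup>2 * (norm (G y z))\<^sup>2
                    + \<gamma>\<^sup>2 * real t * (1 + 2 * (real t - 1) * (real t + 1) * \<gamma> * L) * \<sigma>\<^sup>2)"
proof -
  have "\<gamma> * L \<le> 1"
    using gam1 L_pos by (simp add: field_simps)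
  then interpret pearl_round "\<lambda>v. f v z" "\<lambda>u. G u z" L D g z \<sigma> \<gamma> y
    using D CVX f_grad SM L_pos g_meas g_int unbiased BV gam_pos
    by (intro pearl_round.intro smooth_convex.intro pearl_round_axioms.intro) simp_all
  have "\<gamma>\<^sup>2 * (real t)\<^sup>2 * (norm (G y z))\<^sup>2
      + \<gamma>\<^sup>2 * real t * (1 + 2 * (real t - 1) * (real t + 1) * \<gamma> * L) * \<sigma>\<^sup>2
      - displacement_bound t 0
    = \<gamma>\<^sup>2 * L * \<sigma>\<^sup>2 * \<gamma> * (real t * (real t - 1) * (real t + 2))"
    unfolding displacement_bound_def by (simp add: power2_eq_square algebra_simps)
  moreover have "0 \<le> \<gamma>\<^sup>2 * L * \<sigma>\<^sup>2 * \<gamma> * (real t * (real t - 1) * (real t + 2))"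
    using gam_pos L_pos by (cases t) auto
  ultimately have "displacement_bound t 0
    \<le> \<gamma>\<^sup>2 * (real t)\<^sup>2 * (norm (G y z))\<^sup>2
      + \<gamma>\<^sup>2 * real t * (1 + 2 * (real t - 1) * (real t + 1) * \<gamma> * L) * \<sigma>\<^sup>2"
    by linarith
  then show ?thesis
    using nn_integral_displacement_iterate_le[of 0 t] by (simp add: order_trans ennreal_leI)
qed

end
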